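(* Let $p$ be a prime and let $R$ be a local nearring which is not a nearfield, whose additive group is $\langle a\rangle+\langle b\rangle\cong C_{p^2}\times C_p$ with $ap^2=0$, $bp=0$, $a+b=b+a$, where $a$ is the identity element of $R$. Then the subgroup $\langle ap\rangle$ is an ideal of $R$.
   Context: A (left) nearring is a set $R$ with operations $+,\cdot$ such that $(R,+)$ is a group, $(R,\cdot)$ a semigroup, and $x(y+z)=xy+xz$ for all $x,y,z$. A nearring with identity is local if its non-invertible elements form a subgroup of $(R,+)$; a nearfield is a nearring with identity in which every nonzero element is invertible. An ideal of $R$ is a normal subgroup $I$ of $(R,+)$ such that $xI\subseteq I$ for all $x\in R$ and $(z+x)y-xy\in I$ for all $x,y\in R$, $z\in I$. Additive notation: $ap$ is $a$ added $p$ times. *)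

theory Defs
  imports "HOL-Algebra.Coset" "HOL-Computational_Algebra.Primes"
begin

definition addgrp :: "'a set \<Rightarrow> ('a \<Rightarrow> 'a \<Rightarrow> 'a) \<Rightarrow> 'a \<Rightarrow> 'a monoid" where
  "addgrp R add z = \<lparr>carrier = R, monoid.mult = add, monoid.one = z\<rparr>"

definition nearring :: "'a set \<Rightarrow> ('a \<Rightarrow> 'a \<Rightarrow> 'a) \<Rightarrow> ('a \<Rightarrow> 'a \<Rightarrow> 'a) \<Rightarrow> 'a \<Rightarrow> bool" where
  "nearring R add mul z \<longleftrightarrow>
     group (addgrp R add z) \<and>
     (\<forall>x\<in>R. \<forall>y\<in>R. mul x y \<in> R) \<and>
     (\<forall>x\<in>R. \<forall>y\<in>R. \<forall>w\<in>R. mul (mul x y) w = mul x (mul y w)) \<and>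
     (\<forall>x\<in>R. \<forall>y\<in>R. \<forall>w\<in>R. mul x (add y w) = add (mul x y) (mul x w))"

definition is_identity :: "'a set \<Rightarrow> ('a \<Rightarrow> 'a \<Rightarrow> 'a) \<Rightarrow> 'a \<Rightarrow> bool" where
  "is_identity R mul e \<longleftrightarrow> e \<in> R \<and> (\<forall>x\<in>R. mul e x = x \<and> mul x e = x)"

definition nr_invertible :: "'a set \<Rightarrow> ('a \<Rightarrow> 'a \<Rightarrow> 'a) \<Rightarrow> 'a \<Rightarrow> 'a \<Rightarrow> bool" where
  "nr_invertible R mul e x \<longleftrightarrow> x \<in> R \<and> (\<exists>y\<in>R. mul x y = e \<and> mul y x = e)"

definition local_nearring :: "'a set \<Rightarrow> ('a \<Rightarrow> 'a \<Rightarrow> 'a) \<Rightarrow> ('a \<Rightarrow> 'a \<Rightarrow> 'a) \<Rightarrow> 'a \<Rightarrow> 'a \<Rightarrow> bool" where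
  "local_nearring R add mul z e \<longleftrightarrow>
     nearring R add mul z \<and> is_identity R mul e \<and>
     subgroup {x \<in> R. \<not> nr_invertible R mul e x} (addgrp R add z)"

definition nearfield :: "'a set \<Rightarrow> ('a \<Rightarrow> 'a \<Rightarrow> 'a) \<Rightarrow> ('a \<Rightarrow> 'a \<Rightarrow> 'a) \<Rightarrow> 'a \<Rightarrow> 'a \<Rightarrow> bool" where
  "nearfield R add mul z e \<longleftrightarrow>
     nearring R add mul z \<and> is_identity R mul e \<and>
     (\<forall>x\<in>R. x \<noteq> z \<longrightarrow> nr_invertible R mul e x)"

definition nr_ideal :: "'a set \<Rightarrow> ('a \<Rightarrow> 'a \<Rightarrow> 'a) \<Rightarrow> ('a \<Rightarrow> 'a \<Rightarrow> 'a) \<Rightarrow> 'a \<Rightarrow> 'a set \<Rightarrow> bool" where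
  "nr_ideal R add mul z I \<longleftrightarrow>
     normal I (addgrp R add z) \<and>
     (\<forall>x\<in>R. \<forall>i\<in>I. mul x i \<in> I) \<and>
     (\<forall>x\<in>R. \<forall>y\<in>R. \<forall>w\<in>I.
        add (mul (add w x) y) (inv\<^bsub>addgrp R add z\<^esub> (mul x y)) \<in> I)"

end

(*
  Left distributivity makes left multiplication by x an endomorphism of the
  abelian group G = <a> + <b>, so x(ia + jb) = ix + j(xb) and the multiplication
  is governed by x |-> xb. Since p(xb) = x(pb) = 0, xb is congruent to tau(x) b
  modulo I = <ap>, and associativity makes tau multiplicative modulo p. The only
  nontrivial ideal axiom, (w + x)y = xy modulo I for w in I, thus reduces to
  tau(w + s) = tau(s). If some x with px = 0 has tau(x) <> 0, then xw = 0 gives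
  x(w + s) = xs and tau(x) cancels. Otherwise tau vanishes on the elements of
  order p, and for s of order p^2 we have w + s = s((1 + pc)a) for some c, where
  tau((1 + pc)a) = 1 because its p-th power is tau((1 + pc)^p a) = tau(a) = 1
  and t^p = t modulo p.
*)

theory Submission
  imports Defs "HOL-Number_Theory.Number_Theory"
begin

lemma cong_one_plus_mult_pow:
  fixes p c k :: nat
  shows "[(1 + p * c) ^ k = 1 + k * p * c] (mod p^2)"
proof (induction k)
  case 0
  then show ?case by simp
next
  case (Suc k)
  have "(1 + p * c) ^ Suc k = (1 + p * c) ^ k * (1 + p * c)"
    by simp
  also have "[\<dots> = (1 + k * p * c) * (1 + p * c)] (mod p^2)"
    by (rule cong_mult[OF Suc.IH cong_refl])
  also have "(1 + k * p * c) * (1 + p * c) = (1 + Suc k * p * c) + (k * c * c) * p^2"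
    by (simp add: algebra_simps power2_eq_square)
  also have "[\<dots> = 1 + Suc k * p * c] (mod p^2)"
    by (simp add: cong_def)
  finally show ?case .
qed

lemma cong_pow_p_one_mod_p2:
  fixes p N :: nat
  assumes "[N = 1] (mod p)"
  shows "[N ^ p = 1] (mod p^2)"
proof (cases "p \<le> 1")
  case True
  then show ?thesis
    using assms by (auto simp: cong_def le_Suc_eq)
next
  case False
  then have "N = 1 + p * (N div p)"
    using assms by (metis cong_def div_mult_mod_eq mod_less add.commute mult.commute not_le)
  then have "[N ^ p = 1 + p * p * (N div p)] (mod p^2)"
    using cong_one_plus_mult_pow[of p "N div p" p] by (simp add: mult.assoc)
  also have "[1 + p * p * (N div p) = 1] (mod p^2)"
    unfolding cong_def power2_eq_square by (simp only: mod_mult_self2)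
  finally show ?thesis .
qed

lemma cong_pow_prime_self:
  fixes p t :: nat
  assumes "prime p"
  shows "[t ^ p = t] (mod p)"
proof -
  have t_pow: "t ^ p = t * t ^ (p - 1)"
    using assms prime_gt_0_nat by (simp add: power_eq_if)
  show ?thesis
  proof (cases "p dvd t")
    case True
    then show ?thesis
      unfolding t_pow cong_def by simp
  next
    case False
    show ?thesis
      using cong_mult[OF cong_refl fermat_theorem[OF assms False], of t] t_pow by simp
  qed
qed

lemma (in group) nat_pow_mod_eq:
  assumes "x \<in> carrier G" "x [^] n = \<one>"
  shows "x [^] (m::nat) = x [^] (m mod n)"
proof -
  have "x [^] m = x [^] (n * (m div n) + m mod n)"
    by simp
  also have "\<dots> = (x [^] n) [^] (m div n) \<otimes> x [^] (m mod n)"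
    using assms(1) by (simp add: nat_pow_mult nat_pow_pow)
  finally show ?thesis
    using assms by simp
qed

lemma (in group) comm_group_if_generated_by_commuting_pair:
  assumes a: "a \<in> carrier G" and b: "b \<in> carrier G" and ab: "a \<otimes> b = b \<otimes> a"
    and gen: "carrier G \<subseteq> {a [^] (i::nat) \<otimes> b [^] (j::nat) | i j. True}"
  shows "comm_group G"
proof (rule group_comm_groupI)
  have pow_comm: "b [^] j \<otimes> a [^] k = a [^] k \<otimes> b [^] j" for j k :: nat
    using group_commutes_pow[OF group_commutes_pow[OF ab a b, of k, symmetric], of j] a b
    by simp
  have prod: "(a [^] i \<otimes> b [^] j) \<otimes> (a [^] k \<otimes> b [^] l) = a [^] (i + k) \<otimes> b [^] (j + l)"
    for i j k l :: nat
  proof -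
    have "(a [^] i \<otimes> b [^] j) \<otimes> (a [^] k \<otimes> b [^] l) = a [^] i \<otimes> ((b [^] j \<otimes> a [^] k) \<otimes> b [^] l)"
      using a b by (simp add: m_assoc)
    also have "\<dots> = (a [^] i \<otimes> a [^] k) \<otimes> (b [^] j \<otimes> b [^] l)"
      using a b by (simp add: pow_comm m_assoc)
    finally show ?thesis
      using a b by (simp add: nat_pow_mult)
  qed
  fix x y assume "x \<in> carrier G" "y \<in> carrier G"
  with gen obtain i j k l where "x = a [^] (i::nat) \<otimes> b [^] (j::nat)" "y = a [^] (k::nat) \<otimes> b [^] (l::nat)"
    by blast
  then show "x \<otimes> y = y \<otimes> x"
    by (simp add: prod add.commute)
qed

locale nearring_on = group G for G (structure) +
  fixes mul :: "'a \<Rightarrow> 'a \<Rightarrow> 'a"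
  assumes mul_closed: "\<lbrakk>x \<in> carrier G; y \<in> carrier G\<rbrakk> \<Longrightarrow> mul x y \<in> carrier G"
    and mul_assoc: "\<lbrakk>x \<in> carrier G; y \<in> carrier G; w \<in> carrier G\<rbrakk> \<Longrightarrow> mul (mul x y) w = mul x (mul y w)"
    and mul_distrib_left: "\<lbrakk>x \<in> carrier G; y \<in> carrier G; w \<in> carrier G\<rbrakk> \<Longrightarrow> mul x (y \<otimes> w) = mul x y \<otimes> mul x w"
begin

lemma mul_one_right:
  assumes "x \<in> carrier G"
  shows "mul x \<one> = \<one>"
proof -
  have "mul x \<one> \<otimes> mul x \<one> = mul x \<one>"
    using mul_distrib_left[of x \<one> \<one>] assms by simp
  then show ?thesis
    using assms mul_closed by simp
qed

lemma mul_nat_pow_right: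
  assumes "x \<in> carrier G" "y \<in> carrier G"
  shows "mul x (y [^] (n::nat)) = (mul x y) [^] n"
  by (induction n) (simp_all add: assms mul_one_right mul_distrib_left)

end

locale unital_nearring_on = nearring_on +
  fixes e :: 'a
  assumes e_closed: "e \<in> carrier G"
    and mul_e_left: "x \<in> carrier G \<Longrightarrow> mul e x = x"
    and mul_e_right: "x \<in> carrier G \<Longrightarrow> mul x e = x"
begin

lemma mul_e_pow_right:
  "x \<in> carrier G \<Longrightarrow> mul x (e [^] (n::nat)) = x [^] n"
  by (simp add: mul_nat_pow_right e_closed mul_e_right)

lemma mul_e_pow_e_pow:
  "mul (e [^] (m::nat)) (e [^] (n::nat)) = e [^] (m * n)"
  by (simp add: mul_e_pow_right e_closed nat_pow_pow)

end

lemma unital_nearring_on_addgrp: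
  fixes R :: "'a set" and add mul :: "'a \<Rightarrow> 'a \<Rightarrow> 'a"
  assumes "nearring R add mul z" "is_identity R mul e"
  shows "unital_nearring_on (addgrp R add z) mul e"
  using assms unfolding nearring_def is_identity_def unital_nearring_on_def
    unital_nearring_on_axioms_def nearring_on_def nearring_on_axioms_def
  by (simp add: addgrp_def)

locale nearring_Cp2_Cp = unital_nearring_on G mul a + comm_group G
  for G (structure) and mul :: "'a \<Rightarrow> 'a \<Rightarrow> 'a" and a :: 'a +
  fixes b :: 'a and p :: nat
  assumes prime_p: "prime p"
    and b_closed: "b \<in> carrier G"
    and a_pow_p2: "a [^] (p^2) = \<one>"
    and b_pow_p: "b [^] p = \<one>"
    and coord_bij: "bij_betw (\<lambda>(i, j). a [^] (i::nat) \<otimes> b [^] (j::nat)) ({..<p^2} \<times> {..<p}) (carrier G)"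
begin

lemmas a_closed = e_closed

lemma p_gt_1: "1 < p"
  using prime_p prime_gt_1_nat by blast

definition coord :: "'a \<Rightarrow> nat \<times> nat" where
  "coord = the_inv_into ({..<p^2} \<times> {..<p}) (\<lambda>(i, j). a [^] i \<otimes> b [^] j)"

lemma coord_in: "x \<in> carrier G \<Longrightarrow> coord x \<in> {..<p^2} \<times> {..<p}"
  unfolding coord_def using bij_betw_the_inv_into[OF coord_bij] bij_betwE by blast

lemma coord_decomp: "x \<in> carrier G \<Longrightarrow> x = a [^] fst (coord x) \<otimes> b [^] snd (coord x)"
  using f_the_inv_into_f_bij_betw[OF coord_bij, of x] unfolding coord_def
  by (simp add: case_prod_beta)

lemma coord_eq: "coord (a [^] (i::nat) \<otimes> b [^] (j::nat)) = (i mod p^2, j mod p)"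
proof -
  have "a [^] i \<otimes> b [^] j = a [^] (i mod p^2) \<otimes> b [^] (j mod p)"
    using nat_pow_mod_eq[OF a_closed a_pow_p2] nat_pow_mod_eq[OF b_closed b_pow_p] by metis
  then show ?thesis
    unfolding coord_def using p_gt_1
    by (intro the_inv_into_f_eq[OF bij_betw_imp_inj_on[OF coord_bij]]) auto
qed

lemma a_pow_eq_iff: "a [^] (m::nat) = a [^] (n::nat) \<longleftrightarrow> [m = n] (mod p^2)"
proof
  assume "a [^] m = a [^] n"
  then have "(m mod p^2, 0 mod p) = (n mod p^2, 0 mod p)"
    using coord_eq[of m 0] coord_eq[of n 0] by metis
  then show "[m = n] (mod p^2)"
    by (simp add: cong_def)
next
  assume "[m = n] (mod p^2)"
  then show "a [^] m = a [^] n"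
    using nat_pow_mod_eq[OF a_closed a_pow_p2] by (metis cong_def)
qed

lemma pow_p_eq: "x \<in> carrier G \<Longrightarrow> x [^] p = a [^] (p * fst (coord x))"
proof -
  assume x: "x \<in> carrier G"
  have "x [^] p = (a [^] fst (coord x)) [^] p \<otimes> (b [^] snd (coord x)) [^] p"
    using coord_decomp[OF x] a_closed b_closed by (metis nat_pow_closed nat_pow_distrib)
  also have "(b [^] snd (coord x)) [^] p = \<one>"
    using b_closed b_pow_p by (metis nat_pow_one nat_pow_pow mult.commute)
  finally show ?thesis
    using a_closed by (simp add: nat_pow_pow mult.commute)
qed

definition I :: "'a set" where
  "I = {a [^] (p * k) | k::nat. True}"

lemma I_pow_closed: "h \<in> I \<Longrightarrow> h [^] (n::nat) \<in> I"
  unfolding I_def using a_closed by (auto simp: nat_pow_pow mult.assoc)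

lemma I_pow_p: "h \<in> I \<Longrightarrow> h [^] p = \<one>"
proof -
  assume "h \<in> I"
  then obtain k where "h = a [^] (p * k)"
    unfolding I_def by blast
  then have "h [^] p = (a [^] (p^2)) [^] k"
    using a_closed by (simp add: nat_pow_pow power2_eq_square ac_simps)
  then show ?thesis
    by (simp add: a_pow_p2)
qed

lemma subgroup_I: "subgroup I G"
proof (rule subgroupI)
  show "I \<subseteq> carrier G" "I \<noteq> {}"
    unfolding I_def using a_closed by auto
next
  fix h assume h: "h \<in> I"
  then have "h \<in> carrier G"
    unfolding I_def using a_closed by auto
  moreover have "h [^] (p - 1) \<otimes> h = \<one>"
    using I_pow_p[OF h] p_gt_1 \<open>h \<in> carrier G\<close> by (metis Suc_diff_1 nat_pow_Suc zero_less_one less_trans)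
  ultimately have "inv h = h [^] (p - 1)"
    by (simp add: inv_equality)
  then show "inv h \<in> I"
    using I_pow_closed[OF h] by simp
next
  fix h h' assume "h \<in> I" "h' \<in> I"
  then obtain k k' where "h = a [^] (p * k)" "h' = a [^] (p * k')"
    unfolding I_def by blast
  then have "h \<otimes> h' = a [^] (p * (k + k'))"
    using a_closed by (simp add: nat_pow_mult distrib_left)
  then show "h \<otimes> h' \<in> I"
    unfolding I_def by blast
qed

lemma normal_I: "I \<lhd> G"
  by (rule subgroup_imp_normal[OF subgroup_I])

lemma I_subset: "I \<subseteq> carrier G"
  using subgroup.subset[OF subgroup_I] .

lemma I_closed: "h \<in> I \<Longrightarrow> h \<in> carrier G"
  using I_subset by blast

lemma pow_p_in_I: "x \<in> carrier G \<Longrightarrow> x [^] p \<in> I"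
  unfolding I_def using pow_p_eq by blast

lemma mul_I_closed:
  assumes x: "x \<in> carrier G" and h: "h \<in> I"
  shows "mul x h \<in> I"
proof -
  obtain k where "h = a [^] (p * k)"
    using h unfolding I_def by blast
  then have "mul x h = (x [^] p) [^] k"
    using x by (simp add: mul_e_pow_right nat_pow_pow)
  then show ?thesis
    using I_pow_closed[OF pow_p_in_I[OF x]] by simp
qed

lemma rcos_I_mult_I:
  assumes "h \<in> I" "x \<in> carrier G"
  shows "I #> (h \<otimes> x) = I #> x"
  using coset_mult_assoc[OF I_subset I_closed[OF assms(1)] assms(2)]
    subgroup.rcos_const[OF subgroup_I is_group assms(1)] by simp

lemma rcos_I_eqD:
  assumes "I #> x = I #> y" "x \<in> carrier G"
  obtains h where "h \<in> I" "x = h \<otimes> y"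
  using rcos_self[OF assms(2) subgroup_I] assms(1) unfolding r_coset_def by blast

lemma b_pow_rcos_eq:
  assumes "I #> b [^] (i::nat) = I #> b [^] (j::nat)"
  shows "i mod p = j mod p"
proof -
  obtain h where "h \<in> I" and h: "b [^] i = h \<otimes> b [^] j"
    using rcos_I_eqD[OF assms] b_closed by blast
  then obtain k where "b [^] i = a [^] (p * k) \<otimes> b [^] j"
    unfolding I_def by blast
  then have "coord (a [^] (0::nat) \<otimes> b [^] i) = coord (a [^] (p * k) \<otimes> b [^] j)"
    using b_closed a_closed by simp
  then have "(0 mod p^2, i mod p) = (p * k mod p^2, j mod p)"
    unfolding coord_eq .
  then show ?thesis
    by simp
qed

lemma p_torsion_rcos:
  assumes x: "x \<in> carrier G" and "x [^] p = \<one>"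
  shows "I #> x = I #> b [^] snd (coord x)"
proof -
  have "[p * fst (coord x) = 0] (mod p^2)"
    using assms pow_p_eq[OF x] a_pow_eq_iff[of _ 0] by simp
  then have "p dvd fst (coord x)"
    using p_gt_1 by (simp add: cong_0_iff power2_eq_square)
  then obtain c where "fst (coord x) = p * c" ..
  then have "a [^] fst (coord x) \<in> I"
    unfolding I_def by auto
  then show ?thesis
    using rcos_I_mult_I coord_decomp[OF x] b_closed by (metis nat_pow_closed)
qed

lemma rcos_I_hom: "group_hom G (G Mod I) (\<lambda>x. I #> x)"
  using normal.factorgroup_is_group[OF normal_I] normal.r_coset_hom_Mod[OF normal_I]
  by (simp add: group_hom_def group_hom_axioms_def is_group)

lemma rcos_I_pow_cong:
  assumes "I #> x = I #> y" "x \<in> carrier G" "y \<in> carrier G"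
  shows "I #> x [^] (n::nat) = I #> y [^] n"
proof -
  interpret q: group_hom G "G Mod I" "\<lambda>x. I #> x"
    by (rule rcos_I_hom)
  show ?thesis
    using assms by (simp add: q.hom_nat_pow)
qed

definition tau :: "'a \<Rightarrow> nat" where
  "tau x = snd (coord (mul x b))"

lemma tau_less: "x \<in> carrier G \<Longrightarrow> tau x < p"
  unfolding tau_def using coord_in mul_closed b_closed by fastforce

lemma mul_b_pow_p: "x \<in> carrier G \<Longrightarrow> (mul x b) [^] p = \<one>"
  using mul_nat_pow_right[of x b p] b_closed b_pow_p mul_one_right by simp

lemma rcos_mul_b: "x \<in> carrier G \<Longrightarrow> I #> mul x b = I #> b [^] tau x"
  unfolding tau_def using p_torsion_rcos mul_closed b_closed mul_b_pow_p by simp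

lemma tau_eqI:
  assumes "x \<in> carrier G" "I #> mul x b = I #> b [^] (j::nat)"
  shows "tau x = j mod p"
  using b_pow_rcos_eq[of "tau x" j] rcos_mul_b tau_less assms by simp

lemma tau_a: "tau a = 1"
proof -
  have "I #> mul a b = I #> b [^] (1::nat)"
    using b_closed by (simp add: mul_e_left)
  from tau_eqI[OF a_closed this] show ?thesis
    using p_gt_1 by simp
qed

lemma tau_mul:
  assumes r: "r \<in> carrier G" and s: "s \<in> carrier G"
  shows "tau (mul r s) = tau r * tau s mod p"
proof -
  obtain h where h: "h \<in> I" and s_b: "mul s b = h \<otimes> b [^] tau s"
    using rcos_I_eqD[OF rcos_mul_b[OF s]] mul_closed s b_closed by blast
  note h_closed = I_closed[OF h]
  have "mul (mul r s) b = mul r (h \<otimes> b [^] tau s)"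
    using r s b_closed s_b by (simp add: mul_assoc)
  also have "\<dots> = mul r h \<otimes> (mul r b) [^] tau s"
    using r h_closed b_closed by (simp add: mul_distrib_left mul_nat_pow_right)
  finally have "mul (mul r s) b = mul r h \<otimes> (mul r b) [^] tau s" .
  then have "I #> mul (mul r s) b = I #> (mul r b) [^] tau s"
    using rcos_I_mult_I[OF mul_I_closed[OF r h]] r mul_closed b_closed by simp
  also have "\<dots> = I #> (b [^] tau r) [^] tau s"
    using rcos_I_pow_cong[OF rcos_mul_b[OF r]] r mul_closed b_closed by simp
  also have "\<dots> = I #> b [^] (tau r * tau s)"
    using b_closed by (simp add: nat_pow_pow)
  finally show ?thesis
    using tau_eqI mul_closed[OF r s] by simp
qed

lemma tau_a_pow_power: "tau (a [^] ((N::nat) ^ k)) = tau (a [^] N) ^ k mod p"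
proof (induction k)
  case 0
  then show ?case
    using a_closed tau_a p_gt_1 by simp
next
  case (Suc k)
  have "a [^] (N ^ Suc k) = mul (a [^] (N ^ k)) (a [^] N)"
    by (simp add: mul_e_pow_e_pow mult.commute)
  then show ?case
    using Suc.IH tau_mul a_closed by (simp add: mod_mult_right_eq mult.commute)
qed

lemma tau_a_pow_unit:
  assumes "[N = 1] (mod p)"
  shows "tau (a [^] N) = 1"
proof -
  have "a [^] (N ^ p) = a [^] (1::nat)"
    using a_pow_eq_iff cong_pow_p_one_mod_p2[OF assms] by blast
  then have "tau (a [^] N) ^ p mod p = 1"
    using tau_a_pow_power[of N p] tau_a a_closed by simp
  moreover have "tau (a [^] N) ^ p mod p = tau (a [^] N)"
    using cong_pow_prime_self[OF prime_p] tau_less a_closed by (simp add: cong_def)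
  ultimately show ?thesis
    by simp
qed

lemma tau_rcos_invariant_of_witness:
  assumes x: "x \<in> carrier G" "x [^] p = \<one>" "tau x \<noteq> 0"
    and h: "h \<in> I" and s: "s \<in> carrier G"
  shows "tau (h \<otimes> s) = tau s"
proof -
  note h_closed = I_closed[OF h]
  obtain k where "h = a [^] (p * k)"
    using h unfolding I_def by blast
  then have "mul x h = \<one>"
    using x by (simp add: mul_e_pow_right flip: nat_pow_pow)
  then have "mul x (h \<otimes> s) = mul x s"
    using x h_closed s mul_closed by (simp add: mul_distrib_left)
  then have "[tau x * tau (h \<otimes> s) = tau x * tau s] (mod p)"
    using tau_mul x h_closed s unfolding cong_def by (metis m_closed)
  moreover have "coprime (tau x) p"
    using x tau_less prime_p by (metis coprime_commute dvd_imp_le not_less prime_imp_coprime_nat neq0_conv)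
  ultimately have "[tau (h \<otimes> s) = tau s] (mod p)"
    using cong_mult_lcancel_nat by blast
  then show ?thesis
    using tau_less h_closed s by (simp add: cong_def)
qed

lemma I_eq_pow_multiple:
  assumes s: "s \<in> carrier G" "s [^] p \<noteq> \<one>" and h: "h \<in> I"
  obtains c where "s [^] (p * c) = h"
proof -
  define i where "i = fst (coord s)"
  obtain k where k: "h = a [^] (p * k)"
    using h unfolding I_def by blast
  have s_pow_p: "s [^] p = a [^] (p * i)"
    unfolding i_def using pow_p_eq[OF s(1)] .
  have "\<not> p dvd i"
  proof
    assume "p dvd i"
    then have "[p * i = 0] (mod p^2)"
      by (auto simp: cong_0_iff power2_eq_square)
    then have "s [^] p = a [^] (0::nat)"
      unfolding s_pow_p a_pow_eq_iff .
    then show False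
      using s(2) by simp
  qed
  then have "coprime i p"
    using prime_p by (metis coprime_commute prime_imp_coprime_nat)
  then obtain i' where "[i * i' = 1] (mod p)"
    using cong_solve_coprime_nat by auto
  then have "[i * (i' * k) = k] (mod p)"
    using cong_mult[OF _ cong_refl[of k]] by (fastforce simp: mult.assoc)
  then have "[p * (i * (i' * k)) = p * k] (mod p^2)"
    by (simp add: cong_def power2_eq_square mod_mult_mult1)
  then have "a [^] (p * i * (i' * k)) = h"
    unfolding k a_pow_eq_iff by (simp add: mult.assoc)
  moreover have "s [^] (p * (i' * k)) = a [^] (p * i * (i' * k))"
    using s_pow_p s(1) a_closed nat_pow_pow[of s p "i' * k"] by (simp add: nat_pow_pow)
  ultimately show ?thesis
    using that by simp
qed

lemma tau_rcos_invariant_of_no_witness: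
  assumes no_witness: "\<forall>x\<in>carrier G. x [^] p = \<one> \<longrightarrow> tau x = 0"
    and h: "h \<in> I" and s: "s \<in> carrier G"
  shows "tau (h \<otimes> s) = tau s"
proof (cases "s [^] p = \<one>")
  case True
  note h_closed = I_closed[OF h]
  then have "(h \<otimes> s) [^] p = \<one>"
    using True I_pow_p[OF h] s by (simp add: nat_pow_distrib)
  then show ?thesis
    using True no_witness h_closed s by simp
next
  case False
  then obtain c where c: "s [^] (p * c) = h"
    using I_eq_pow_multiple h s by blast
  define u where "u = a [^] (1 + p * c)"
  have "mul s u = s [^] (1 + p * c)"
    unfolding u_def by (rule mul_e_pow_right[OF s])
  also have "\<dots> = h \<otimes> s"
    using c by simp
  finally have "tau (h \<otimes> s) = tau s * tau u mod p"
    using tau_mul[OF s] a_closed unfolding u_def by (metis nat_pow_closed)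
  moreover have "tau u = 1"
    unfolding u_def by (rule tau_a_pow_unit) (simp only: cong_def mod_mult_self2)
  ultimately show ?thesis
    using tau_less[OF s] by simp
qed

lemma tau_rcos_invariant: "h \<in> I \<Longrightarrow> s \<in> carrier G \<Longrightarrow> tau (h \<otimes> s) = tau s"
  using tau_rcos_invariant_of_witness tau_rcos_invariant_of_no_witness by blast

lemma mul_eq_coord_expansion:
  assumes x: "x \<in> carrier G" and y: "y \<in> carrier G"
  shows "mul x y = x [^] fst (coord y) \<otimes> (mul x b) [^] snd (coord y)"
proof -
  have "mul x y = mul x (a [^] fst (coord y)) \<otimes> mul x (b [^] snd (coord y))"
    using coord_decomp[OF y] x a_closed b_closed by (metis mul_distrib_left nat_pow_closed)
  then show ?thesis
    using x b_closed by (simp add: mul_e_pow_right mul_nat_pow_right)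
qed

lemma rcos_mul_I_left:
  assumes h: "h \<in> I" and x: "x \<in> carrier G" and y: "y \<in> carrier G"
  shows "I #> mul (h \<otimes> x) y = I #> mul x y"
proof -
  interpret q: group_hom G "G Mod I" "\<lambda>x. I #> x"
    by (rule rcos_I_hom)
  have rcos_mul: "I #> mul v y =
      (I #> v) [^]\<^bsub>G Mod I\<^esub> fst (coord y) \<otimes>\<^bsub>G Mod I\<^esub> (I #> mul v b) [^]\<^bsub>G Mod I\<^esub> snd (coord y)"
    if "v \<in> carrier G" for v
    using mul_eq_coord_expansion[OF that y] that mul_closed b_closed
    by (simp add: q.hom_mult q.hom_nat_pow)
  note h_closed = I_closed[OF h]
  have "I #> (h \<otimes> x) = I #> x"
    using rcos_I_mult_I h x by blast
  moreover have "I #> mul (h \<otimes> x) b = I #> mul x b"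
    using rcos_mul_b tau_rcos_invariant h h_closed x by simp
  ultimately show ?thesis
    using rcos_mul h_closed x by simp
qed

lemma mul_I_left_diff_in_I:
  assumes h: "h \<in> I" and x: "x \<in> carrier G" and y: "y \<in> carrier G"
  shows "mul (h \<otimes> x) y \<otimes> inv (mul x y) \<in> I"
proof -
  have hx: "h \<otimes> x \<in> carrier G"
    using I_closed[OF h] x by simp
  have "mul (h \<otimes> x) y \<in> I #> mul x y"
    using rcos_self[OF mul_closed[OF hx y] subgroup_I] rcos_mul_I_left[OF h x y] by simp
  then show ?thesis
    using subgroup.rcos_module_imp[OF subgroup_I is_group] mul_closed[OF x y] by blast
qed

end

theorem lemma10:
  fixes p :: nat and R :: "'a set" and add mul :: "'a \<Rightarrow> 'a \<Rightarrow> 'a" and z a b :: 'a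
  assumes "prime p"
    and "local_nearring R add mul z a"
    and "\<not> nearfield R add mul z a"
    and "a \<in> R" and "b \<in> R"
    and "add a b = add b a"
    and "a [^]\<^bsub>addgrp R add z\<^esub> (p ^ 2) = z"
    and "b [^]\<^bsub>addgrp R add z\<^esub> p = z"
    and "bij_betw (\<lambda>(i, j). add (a [^]\<^bsub>addgrp R add z\<^esub> (i::nat)) (b [^]\<^bsub>addgrp R add z\<^esub> (j::nat)))
           ({..<p ^ 2} \<times> {..<p}) R"
  shows "nr_ideal R add mul z {(a [^]\<^bsub>addgrp R add z\<^esub> p) [^]\<^bsub>addgrp R add z\<^esub> (k::nat) | k. True}"
proof -
  let ?G = "addgrp R add z"
  have G: "carrier ?G = R" "\<And>x y. x \<otimes>\<^bsub>?G\<^esub> y = add x y" "\<one>\<^bsub>?G\<^esub> = z"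
    by (simp_all add: addgrp_def)
  interpret unital_nearring_on ?G mul a
    by (rule unital_nearring_on_addgrp) (use assms(2) in \<open>simp_all add: local_nearring_def\<close>)
  have "comm_group ?G"
    using comm_group_if_generated_by_commuting_pair[of a b] assms(4-6,9) G
    unfolding bij_betw_def by force
  then interpret nearring_Cp2_Cp ?G mul a b p
    by (intro nearring_Cp2_Cp.intro unital_nearring_on_axioms nearring_Cp2_Cp_axioms.intro)
      (use assms(1,5,7-9) G in simp_all)
  have "{(a [^]\<^bsub>?G\<^esub> p) [^]\<^bsub>?G\<^esub> (k::nat) | k. True} = I"
    unfolding I_def using a_closed by (simp add: nat_pow_pow)
  then show ?thesis
    unfolding nr_ideal_def using normal_I mul_I_closed mul_I_left_diff_in_I G by auto
qed

end
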